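(* Let $\eta>0$, $L>0$, $\nu>0$ with $\eta\le L$. Define error functions recursively by a scalar $e_0>0$ and $$e_k(\gamma_0,\dots,\gamma_{k-1})=(1-\eta\gamma_{k-1})\,e_{k-1}(\gamma_0,\dots,\gamma_{k-2})+\gamma_{k-1}^2\nu^2,\qquad k\ge1,$$ where $e_0$ satisfies $\frac{\eta}{2\nu^2}e_0\le\frac1L$. Let $\gamma_0^*=\frac{\eta}{2\nu^2}e_0$ and $\gamma_k^*=\gamma_{k-1}^*\big(1-\frac{\eta}{2}\gamma_{k-1}^*\big)$ for $k\ge1$. Then: (a) $e_k(\gamma_0^*,\dots,\gamma_{k-1}^* )=\frac{2\nu^2}{\eta}\gamma_k^*$ for all $k\ge0$; (b) for each $k\ge1$, $(\gamma_0^*,\dots,\gamma_{k-1}^* )$ minimizes $e_k$ over $\mathbb{G}_k=\{\alpha\in\mathbb{R}^k:0<\alpha_j\le\frac1L,\ j=1,\dots,k\}$; more precisely, for any $k\ge1$ and any $(\gamma_0,\dots,\gamma_{k-1})\in\mathbb{G}_k$, $e_k(\gamma_0,\dots,\gamma_{k-1})-e_k(\gamma_0^*,\dots,\gamma_{k-1}^* )\ge\nu^2(\gamma_{k-1}-\gamma_{k-1}^* )^2$; (c) $(\gamma_0^*,\dots,\gamma_{k-1}^* )$ is a stationary point of $e_k$ over $\mathbb{G}_k$.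
   Context: In the paper, $\eta$ is the strong convexity constant and $L$ the Lipschitz constant of the gradient of the objective $f$ (hence $\eta\le L$), and $\nu^2$ is an upper bound on the conditional second moments $\mathbb{E}[\|w_k\|^2\mid\mathcal{F}_k]$ of the stochastic gradient errors. *)

theory Defs
  imports "HOL-Analysis.Analysis"
begin

text \<open>Error recursion: e_0 = e0, e_k = (1 - eta * g_(k-1)) e_(k-1) + g_(k-1)^2 nu^2.
  A step-size vector (g_0,...,g_(k-1)) is represented by a sequence g :: nat => real,
  of which only the first k entries are used by err ... g k.\<close>
primrec err :: "real \<Rightarrow> real \<Rightarrow> real \<Rightarrow> (nat \<Rightarrow> real) \<Rightarrow> nat \<Rightarrow> real" where
  "err eta nu e0 g 0 = e0"
| "err eta nu e0 g (Suc k) = (1 - eta * g k) * err eta nu e0 g k + (g k)\<^sup>2 * nu\<^sup>2"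

primrec gstar :: "real \<Rightarrow> real \<Rightarrow> real \<Rightarrow> nat \<Rightarrow> real" where
  "gstar eta nu e0 0 = eta / (2 * nu\<^sup>2) * e0"
| "gstar eta nu e0 (Suc k) = gstar eta nu e0 k * (1 - eta / 2 * gstar eta nu e0 k)"

definition in_G :: "real \<Rightarrow> nat \<Rightarrow> (nat \<Rightarrow> real) \<Rightarrow> bool" where
  "in_G L k a \<longleftrightarrow> (\<forall>j<k. 0 < a j \<and> a j \<le> 1 / L)"

definition stationary_over ::
  "nat \<Rightarrow> ((nat \<Rightarrow> real) \<Rightarrow> real) \<Rightarrow> ((nat \<Rightarrow> real) \<Rightarrow> bool) \<Rightarrow> (nat \<Rightarrow> real) \<Rightarrow> bool" where
  "stationary_over k F S x \<longleftrightarrow> S x \<and>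
     (\<exists>grad :: nat \<Rightarrow> real.
        (\<forall>j<k. ((\<lambda>t. F (x(j := t))) has_real_derivative grad j) (at (x j))) \<and>
        (\<forall>y. S y \<longrightarrow> (\<Sum>j<k. grad j * (y j - x j)) \<ge> 0))"

end

theory Submission
  imports Defs
begin

text \<open>Write \<open>c = 2\<nu>\<^sup>2/\<eta>\<close>. Completing the square gives
  \<open>(1 - \<eta>t) c s + t\<^sup>2\<nu>\<^sup>2 = c s (1 - \<eta>s/2) + \<nu>\<^sup>2(t - s)\<^sup>2\<close>, so \<open>e\<^sub>k(\<gamma>\<^sup>*) = c \<gamma>\<^sup>*\<^sub>k\<close> by induction.
  On \<open>\<bbbG>\<^sub>k\<close> the factors \<open>1 - \<eta>\<gamma>\<^sub>j\<close> are nonnegative, so \<open>e\<^sub>k\<close> is monotone in \<open>e\<^sub>k\<^sub>-\<^sub>1\<close>, and the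
  same identity with \<open>e\<^sub>k\<^sub>-\<^sub>1 \<ge> c \<gamma>\<^sup>*\<^sub>k\<^sub>-\<^sub>1\<close> yields minimality together with the gap
  \<open>\<nu>\<^sup>2(\<gamma>\<^sub>k\<^sub>-\<^sub>1 - \<gamma>\<^sup>*\<^sub>k\<^sub>-\<^sub>1)\<^sup>2\<close>. The partial derivative of \<open>e\<^sub>k\<close> in the last variable is
  \<open>-\<eta> e\<^sub>k\<^sub>-\<^sub>1 + 2\<gamma>\<^sub>k\<^sub>-\<^sub>1\<nu>\<^sup>2\<close>, which vanishes at \<open>\<gamma>\<^sup>*\<close>; the earlier variables enter only
  through \<open>e\<^sub>k\<^sub>-\<^sub>1\<close>, so all partial derivatives vanish there.\<close>

lemma err_cong: "(\<And>i. i < k \<Longrightarrow> g i = h i) \<Longrightarrow> err eta nu e0 g k = err eta nu e0 h k"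
  by (induction k) auto

lemma err_step_complete_square:
  fixes eta nu s t :: real
  assumes "eta \<noteq> 0"
  shows "(1 - eta * t) * (2 * nu\<^sup>2 / eta * s) + t\<^sup>2 * nu\<^sup>2
    = 2 * nu\<^sup>2 / eta * (s * (1 - eta / 2 * s)) + nu\<^sup>2 * (t - s)\<^sup>2"
  using assms by (simp add: field_simps power2_eq_square)

lemma err_gstar:
  assumes "eta \<noteq> 0" "nu \<noteq> 0"
  shows "err eta nu e0 (gstar eta nu e0) k = 2 * nu\<^sup>2 / eta * gstar eta nu e0 k"
proof (induction k)
  case 0
  then show ?case using assms by (simp add: field_simps)
next
  case (Suc k)
  then show ?case
    using err_step_complete_square[OF assms(1), where s = "gstar eta nu e0 k" and t = "gstar eta nu e0 k"]
    by simp
qed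

lemma mult_le_1_if_le_inverse:
  fixes eta L x :: real
  assumes "0 < x" "x \<le> 1 / L" "eta \<le> L"
  shows "eta * x \<le> 1"
proof -
  have "L > 0" using assms(1,2) zero_less_divide_1_iff[of L] by linarith
  then have "eta * x \<le> L * (1 / L)" using assms by (intro mult_mono) auto
  then show ?thesis using \<open>L > 0\<close> by simp
qed

lemma gstar_in_G:
  assumes "eta > 0" "nu \<noteq> 0" "eta \<le> L" "e0 > 0" "eta / (2 * nu\<^sup>2) * e0 \<le> 1 / L"
  shows "in_G L k (gstar eta nu e0)"
proof -
  have "0 < gstar eta nu e0 j \<and> gstar eta nu e0 j \<le> 1 / L" for j
  proof (induction j)
    case 0
    show ?case using assms by simp
  next
    case (Suc j)
    define s where "s = gstar eta nu e0 j"
    have s: "0 < s" "s \<le> 1 / L" using Suc s_def by auto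
    have "eta * s \<le> 1" using mult_le_1_if_le_inverse s assms(3) .
    then have "0 < 1 - eta / 2 * s" by simp
    moreover have "0 \<le> eta / 2 * s * s" using s assms by simp
    then have "s * (1 - eta / 2 * s) \<le> 1 / L" using s by (simp add: algebra_simps)
    ultimately show ?case using s by (simp add: s_def[symmetric])
  qed
  then show ?thesis unfolding in_G_def by blast
qed

lemma err_Suc_gap:
  assumes "eta \<noteq> 0" "nu \<noteq> 0" "eta * g k \<le> 1"
    and "err eta nu e0 (gstar eta nu e0) k \<le> err eta nu e0 g k"
  shows "err eta nu e0 g (Suc k) - err eta nu e0 (gstar eta nu e0) (Suc k)
    \<ge> nu\<^sup>2 * (g k - gstar eta nu e0 k)\<^sup>2"
proof -
  let ?c = "2 * nu\<^sup>2 / eta" and ?s = "gstar eta nu e0 k"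
  have "(1 - eta * g k) * (?c * ?s) \<le> (1 - eta * g k) * err eta nu e0 g k"
    using assms(3,4) err_gstar[OF assms(1,2)] by (intro mult_left_mono) auto
  moreover have "err eta nu e0 (gstar eta nu e0) (Suc k) = ?c * (?s * (1 - eta / 2 * ?s))"
    using err_gstar[OF assms(1,2), of e0 "Suc k"] by simp
  moreover have "err eta nu e0 g (Suc k) = (1 - eta * g k) * err eta nu e0 g k + (g k)\<^sup>2 * nu\<^sup>2"
    by simp
  ultimately show ?thesis
    using err_step_complete_square[OF assms(1), where nu = nu and s = ?s and t = "g k"]
    by linarith
qed

lemma err_gstar_le:
  assumes "eta \<noteq> 0" "nu \<noteq> 0" "\<And>j. j < k \<Longrightarrow> eta * g j \<le> 1"
  shows "err eta nu e0 (gstar eta nu e0) k \<le> err eta nu e0 g k"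
  using assms(3)
proof (induction k)
  case 0
  then show ?case by simp
next
  case (Suc k)
  then have "nu\<^sup>2 * (g k - gstar eta nu e0 k)\<^sup>2
      \<le> err eta nu e0 g (Suc k) - err eta nu e0 (gstar eta nu e0) (Suc k)"
    by (intro err_Suc_gap assms(1,2)) auto
  moreover have "0 \<le> nu\<^sup>2 * (g k - gstar eta nu e0 k)\<^sup>2" by simp
  ultimately show ?case by linarith
qed

lemma err_gstar_partial_deriv:
  assumes "eta \<noteq> 0" "nu \<noteq> 0"
  shows "((\<lambda>t. err eta nu e0 ((gstar eta nu e0)(j := t)) k) has_real_derivative 0)
    (at (gstar eta nu e0 j))"
proof (induction k)
  case 0
  then show ?case by simp
next
  case (Suc k)
  let ?x = "gstar eta nu e0" and ?E = "err eta nu e0 (gstar eta nu e0) k"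
  show ?case
  proof (cases "j = k")
    case True
    have "err eta nu e0 (?x(j := t)) k = ?E" for t
      using True by (intro err_cong) auto
    then have eq: "(\<lambda>t. err eta nu e0 (?x(j := t)) (Suc k)) = (\<lambda>t. (1 - eta * t) * ?E + t\<^sup>2 * nu\<^sup>2)"
      using True by simp
    have "((\<lambda>t. (1 - eta * t) * ?E + t\<^sup>2 * nu\<^sup>2) has_real_derivative - eta * ?E + 2 * ?x k * nu\<^sup>2)
        (at (?x j))"
      using True by (auto intro!: derivative_eq_intros)
    moreover have "- eta * ?E + 2 * ?x k * nu\<^sup>2 = 0"
      using err_gstar[OF assms, of e0 k] assms by (simp add: field_simps)
    ultimately show ?thesis unfolding eq by simp
  next
    case False
    then have eq: "(\<lambda>t. err eta nu e0 (?x(j := t)) (Suc k))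
        = (\<lambda>t. (1 - eta * ?x k) * err eta nu e0 (?x(j := t)) k + (?x k)\<^sup>2 * nu\<^sup>2)"
      by auto
    have "((\<lambda>t. (1 - eta * ?x k) * err eta nu e0 (?x(j := t)) k + (?x k)\<^sup>2 * nu\<^sup>2)
        has_real_derivative 0) (at (?x j))"
      using DERIV_add[OF DERIV_cmult[OF Suc.IH, of "1 - eta * ?x k"] DERIV_const[of "(?x k)\<^sup>2 * nu\<^sup>2"]]
      by (simp only: mult_zero_right add_0_right)
    then show ?thesis unfolding eq .
  qed
qed

lemma stationary_overI_zero_gradient:
  assumes "S x" "\<And>j. j < k \<Longrightarrow> ((\<lambda>t. F (x(j := t))) has_real_derivative 0) (at (x j))"
  shows "stationary_over k F S x"
  unfolding stationary_over_def using assms by (intro conjI exI[of _ "\<lambda>_. 0"]) auto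

theorem proposition2:
  fixes eta L nu e0 :: real
  assumes "eta > 0" and "L > 0" and "nu > 0" and "eta \<le> L"
    and "e0 > 0" and "eta / (2 * nu\<^sup>2) * e0 \<le> 1 / L"
  shows "(\<forall>k. err eta nu e0 (gstar eta nu e0) k = 2 * nu\<^sup>2 / eta * gstar eta nu e0 k)
    \<and> (\<forall>k\<ge>1. in_G L k (gstar eta nu e0) \<and>
         (\<forall>g. in_G L k g \<longrightarrow>
            err eta nu e0 g k - err eta nu e0 (gstar eta nu e0) k
              \<ge> nu\<^sup>2 * (g (k - 1) - gstar eta nu e0 (k - 1))\<^sup>2))
    \<and> (\<forall>k\<ge>1. stationary_over k (\<lambda>g. err eta nu e0 g k) (in_G L k) (gstar eta nu e0))"
proof (intro conjI allI impI)
  have eta: "eta \<noteq> 0" and nu: "nu \<noteq> 0" using assms by auto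
  fix k :: nat
  show "err eta nu e0 (gstar eta nu e0) k = 2 * nu\<^sup>2 / eta * gstar eta nu e0 k"
    using err_gstar[OF eta nu] .
  show G: "in_G L k (gstar eta nu e0)"
    using gstar_in_G assms by simp
  show "stationary_over k (\<lambda>g. err eta nu e0 g k) (in_G L k) (gstar eta nu e0)"
    using G err_gstar_partial_deriv[OF eta nu] by (rule stationary_overI_zero_gradient)
  fix g assume "1 \<le> k" "in_G L k g"
  then obtain m where k: "k = Suc m" by (cases k) auto
  have "eta * g j \<le> 1" if "j < k" for j
    using \<open>in_G L k g\<close> that mult_le_1_if_le_inverse assms(4) unfolding in_G_def by blast
  then have "err eta nu e0 g (Suc m) - err eta nu e0 (gstar eta nu e0) (Suc m)
      \<ge> nu\<^sup>2 * (g m - gstar eta nu e0 m)\<^sup>2"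
    unfolding k by (intro err_Suc_gap err_gstar_le eta nu) auto
  then show "err eta nu e0 g k - err eta nu e0 (gstar eta nu e0) k
      \<ge> nu\<^sup>2 * (g (k - 1) - gstar eta nu e0 (k - 1))\<^sup>2"
    by (simp only: k diff_Suc_1)
qed

end
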